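(* Let $\mathbb{F}\in\{\mathbb{R},\mathbb{C}\}$, $1\le d\le N-1$, let $F=(f_n)_{n=1}^N$ be an equal norm tight frame in $\mathbb{F}^d$ with $\|f_n\|^2=d$ for all $n$, and let $G=(g_n)_{n=1}^N$ be a Naimark complement of $F$. Then $\Psi_{N,d}(\lambda_F)=\lambda_{\widetilde G}$.
   Context: A frame $F=(f_n)_{n=1}^N$ in $\mathbb{F}^d$ is a spanning family, identified with the $d\times N$ matrix with columns $f_n$; it is tight if $FF^*$ is a multiple of the identity, equal norm if all $\|f_n\|$ coincide (here $\|f_n\|^2=d$, forcing $FF^*=N I_d$). A Naimark complement of such $F$ is a frame $G=(g_n)_{n=1}^N$ in $\mathbb{F}^{N-d}$ (an $(N-d)\times N$ matrix) with $F^*F+G^*G=N\cdot I_N$. For a frame $H$ of $N$ vectors in $\mathbb{F}^k$, $H_n$ is the matrix of its first $n$ columns and $\lambda_H\in\mathbb{R}^{k\times(N+1)}$ has as column $n$ ($0\le n\le N$) the eigenvalues of $H_nH_n^*$ in non-increasing order. $\widetilde G=(g_{N-n+1})_{n=1}^N$ is $G$ with reversed order. $\Psi_{N,d}$ sends $\lambda\in\mathbb{R}^{d\times(N+1)}$ to the $(N-d)\times(N+1)$ matrix with $(\Psi_{N,d}(\lambda))_{i,n}=\lambda_{d+i-n,N-n}$ if $i\le n\le d+i-1$, $=0$ if $n<i$, $=N$ if $n>d+i-1$ ($1\le i\le N-d$, $0\le n\le N$). *)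

theory Defs
  imports "Jordan_Normal_Form.Char_Poly" "Jordan_Normal_Form.Conjugate"
begin

text \<open>Frames are matrices (columns = frame vectors), over 'a = real or complex.
  All indices are 0-based: paper column n (1-based) is Isabelle column n-1,
  paper eigenvalue row i (1-based) is Isabelle row i-1.\<close>

definition adj :: "'a :: conjugatable_field mat \<Rightarrow> 'a mat" where
  "adj A = transpose_mat (map_mat conjugate A)"

definition spanning :: "'a :: conjugatable_field mat \<Rightarrow> bool" where
  "spanning H \<longleftrightarrow> (\<forall>v \<in> carrier_vec (dim_row H). \<exists>c \<in> carrier_vec (dim_col H). v = H *\<^sub>v c)"

definition tight :: "'a :: conjugatable_field mat \<Rightarrow> bool" where
  "tight H \<longleftrightarrow> (\<exists>c. H * adj H = c \<cdot>\<^sub>m 1\<^sub>m (dim_row H))"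

definition colnorm2 :: "'a :: conjugatable_field mat \<Rightarrow> nat \<Rightarrow> 'a" where
  "colnorm2 H j = (\<Sum>i<dim_row H. H $$ (i, j) * conjugate (H $$ (i, j)))"

definition first_cols :: "'a mat \<Rightarrow> nat \<Rightarrow> 'a mat" where
  "first_cols H n = mat (dim_row H) n (\<lambda>(i, j). H $$ (i, j))"

definition rev_cols :: "'a mat \<Rightarrow> 'a mat" where
  "rev_cols H = mat (dim_row H) (dim_col H) (\<lambda>(i, j). H $$ (i, dim_col H - 1 - j))"

definition eigenvalues_desc :: "'a :: {comm_ring_1, real_algebra_1} mat \<Rightarrow> real list" where
  "eigenvalues_desc A = (THE xs. length xs = dim_row A \<and> sorted_wrt (\<ge>) xs \<and>
      char_poly A = prod_list (map (\<lambda>a. [: - of_real a, 1 :]) xs))"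

definition lambda_mat :: "'a :: {conjugatable_field, real_algebra_1} mat \<Rightarrow> nat \<Rightarrow> nat \<Rightarrow> real" where
  "lambda_mat H i n = eigenvalues_desc (first_cols H n * adj (first_cols H n)) ! i"

text \<open>Psi_{N,d}, with 0-based row index r (paper i = r+1).\<close>
definition Psi :: "nat \<Rightarrow> nat \<Rightarrow> (nat \<Rightarrow> nat \<Rightarrow> real) \<Rightarrow> nat \<Rightarrow> nat \<Rightarrow> real" where
  "Psi N d lam r n = (if n < r + 1 then 0 else if n > d + r then real N else lam (d + r - n) (N - n))"

end

theory Submission
  imports Defs
begin

text \<open>Put \<open>m = N - n\<close>, let \<open>Q\<close> be the last \<open>n\<close> columns of \<open>F\<close> in reverse order and \<open>P\<close>
  the first \<open>n\<close> columns of the reversed \<open>G\<close>. Tightness gives \<open>F\<^sub>m F\<^sub>m\<^sup>* + Q Q\<^sup>* = N I\<close> and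
  the Naimark condition gives \<open>Q\<^sup>* Q + P\<^sup>* P = N I\<close>, so the spectrum of \<open>Q Q\<^sup>*\<close> is \<open>N\<close> minus
  that of \<open>F\<^sub>m F\<^sub>m\<^sup>*\<close>, and that of \<open>P\<^sup>* P\<close> is \<open>N\<close> minus that of \<open>Q\<^sup>* Q\<close>. As \<open>A B\<close> and
  \<open>B A\<close> have the same nonzero eigenvalues (Sylvester's determinant identity), these relations
  chain into the multiset identity \<open>d \<times> N + \<lambda>(P P\<^sup>*) + n \<times> 0 = n \<times> N + \<lambda>(F\<^sub>m F\<^sub>m\<^sup>*) + (N - d) \<times> 0\<close>,
  in which all eigenvalues lie in \<open>[0, N]\<close>. Sorting both sides and reading off position
  \<open>d + r\<close> gives the entries of \<open>\<Psi>\<^sub>N\<^sub>,\<^sub>d(\<lambda>\<^sub>F)\<close>.\<close>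

section \<open>Polynomials with prescribed real roots\<close>

definition real_roots_poly :: "real multiset \<Rightarrow> 'a :: {comm_ring_1, real_algebra_1} poly" where
  "real_roots_poly X = (\<Prod>a\<in>#X. [:- of_real a, 1:])"

lemma real_roots_poly_empty [simp]: "real_roots_poly {#} = 1"
  by (simp add: real_roots_poly_def)

lemma real_roots_poly_add_mset [simp]:
  "real_roots_poly (add_mset a X) = [:- of_real a, 1:] * real_roots_poly X"
  by (simp add: real_roots_poly_def)

lemma real_roots_poly_union [simp]:
  "real_roots_poly (X + Y) = real_roots_poly X * real_roots_poly Y"
  by (simp add: real_roots_poly_def)

lemma real_roots_poly_replicate_zero: "real_roots_poly (replicate_mset n 0) = monom 1 n"
  by (simp add: real_roots_poly_def monom_altdef)

lemma poly_real_roots_poly: "poly (real_roots_poly X) x = (\<Prod>a\<in>#X. x - of_real a)"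
  by (simp add: real_roots_poly_def poly_prod_mset)

lemma real_roots_poly_nonzero: "(real_roots_poly X :: 'a :: {idom, real_algebra_1} poly) \<noteq> 0"
  by (auto simp: real_roots_poly_def prod_mset_zero_iff)

lemma degree_real_roots_poly: "degree (real_roots_poly X :: 'a :: {idom, real_algebra_1} poly) = size X"
proof (induction X)
  case (add a X)
  then show ?case
    by (simp add: degree_mult_eq real_roots_poly_nonzero del: mult_pCons_left)
qed simp

lemma order_real_roots_poly:
  "order (of_real a :: 'a :: {idom, real_algebra_1}) (real_roots_poly X) = count X a"
proof (induction X)
  case empty
  show ?case by (simp add: order_0I)
next
  case (add b X)
  have "order (of_real a :: 'a) [:- of_real b, 1:] = (if b = a then 1 else 0)"
    using order_power_n_n[of "of_real a :: 'a" 1] by (auto intro!: order_0I)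
  with add.IH show ?case
    by (simp add: order_mult real_roots_poly_nonzero del: mult_pCons_left)
qed

lemma real_roots_poly_inject:
  "(real_roots_poly X :: 'a :: {idom, real_algebra_1} poly) = real_roots_poly Y \<longleftrightarrow> X = Y"
  by (metis multiset_eqI order_real_roots_poly)

lemma sorted_desc_unique:
  fixes xs ys :: "'a :: linorder list"
  assumes "sorted_wrt (\<ge>) xs" "sorted_wrt (\<ge>) ys" "mset xs = mset ys"
  shows "xs = ys"
proof -
  have "sorted (rev xs)" "sorted (rev ys)" using assms by (simp_all add: sorted_wrt_rev)
  then have "rev xs = rev ys" by (metis assms(3) mset_rev properties_for_sort)
  then show ?thesis by simp
qed

lemma sorted_desc_padded_unique:
  fixes \<mu> \<nu> :: "'a :: linorder list"
  assumes "lo \<le> hi" and "sorted_wrt (\<ge>) \<mu>" "\<forall>a\<in>set \<mu>. lo \<le> a \<and> a \<le> hi"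
    and "sorted_wrt (\<ge>) \<nu>" "\<forall>a\<in>set \<nu>. lo \<le> a"
    and eq: "mset (replicate d hi @ \<nu> @ replicate n lo) = mset (replicate n hi @ \<mu> @ replicate m lo)"
  shows "replicate d hi @ \<nu> @ replicate n lo = replicate n hi @ \<mu> @ replicate m lo"
proof (rule sorted_desc_unique[OF _ _ eq])
  have "a \<le> hi" if "a \<in> set \<nu>" for a
  proof -
    have "a \<in> set (replicate n hi @ \<mu> @ replicate m lo)"
      using mset_eq_setD[OF eq] that by auto
    then show ?thesis using assms(1,3) by (auto split: if_splits)
  qed
  moreover have "sorted_wrt (\<ge>) (replicate k c)" for k and c :: 'a
    by (metis rev_replicate sorted_replicate sorted_wrt_rev)
  ultimately show "sorted_wrt (\<ge>) (replicate d hi @ \<nu> @ replicate n lo)"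
    and "sorted_wrt (\<ge>) (replicate n hi @ \<mu> @ replicate m lo)"
    using assms(1-5) by (auto simp: sorted_wrt_append intro: order_trans)
qed

lemma real_roots_poly_mset: "real_roots_poly (mset xs) = (\<Prod>a\<leftarrow>xs. [:- of_real a, 1:])"
  by (simp add: real_roots_poly_def prod_mset_prod_list flip: mset_map)

lemma eigenvalues_desc_char_poly:
  fixes M :: "'a :: {idom, real_algebra_1} mat"
  assumes M: "M \<in> carrier_mat k k" and cp: "char_poly M = real_roots_poly X"
  shows "mset (eigenvalues_desc M) = X" and "sorted_wrt (\<ge>) (eigenvalues_desc M)"
    and "length (eigenvalues_desc M) = k"
proof -
  define xs where "xs = rev (sorted_list_of_multiset X)"
  have xs: "mset xs = X" "sorted_wrt (\<ge>) xs"
    by (simp_all add: xs_def sorted_wrt_rev)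
  have "length xs = dim_row M"
    using degree_monic_char_poly[OF M] M by (simp flip: xs(1) add: cp degree_real_roots_poly)
  have "eigenvalues_desc M = xs"
    unfolding eigenvalues_desc_def
  proof (rule the_equality)
    show "length xs = dim_row M \<and> sorted_wrt (\<ge>) xs \<and>
      char_poly M = (\<Prod>a\<leftarrow>xs. [:- of_real a, 1:])"
      using \<open>length xs = dim_row M\<close> xs cp by (simp flip: real_roots_poly_mset)
    fix ys assume "length ys = dim_row M \<and> sorted_wrt (\<ge>) ys \<and>
      char_poly M = (\<Prod>a\<leftarrow>ys. [:- of_real a, 1:])"
    then show "ys = xs"
      using xs cp by (metis sorted_desc_unique real_roots_poly_mset real_roots_poly_inject)
  qed
  with xs \<open>length xs = dim_row M\<close> M
  show "mset (eigenvalues_desc M) = X" "sorted_wrt (\<ge>) (eigenvalues_desc M)"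
    and "length (eigenvalues_desc M) = k" by simp_all
qed

section \<open>Characteristic polynomials\<close>

lemma poly_char_poly:
  fixes A :: "'a :: field mat"
  assumes A: "A \<in> carrier_mat n n"
  shows "poly (char_poly A) x = det (x \<cdot>\<^sub>m 1\<^sub>m n - A)"
proof -
  have "- char_matrix A x = x \<cdot>\<^sub>m 1\<^sub>m n - A"
    using A unfolding char_matrix_def by (intro eq_matI) auto
  then show ?thesis using char_poly_matrix[OF A] by simp
qed

lemma det_sylvester:
  fixes A :: "'a :: field mat"
  assumes A: "A \<in> carrier_mat k n" and B: "B \<in> carrier_mat n k"
  shows "x ^ n * det (x \<cdot>\<^sub>m 1\<^sub>m k - A * B) = x ^ k * det (x \<cdot>\<^sub>m 1\<^sub>m n - B * A)"
proof -
  define M where "M = four_block_mat (x \<cdot>\<^sub>m 1\<^sub>m k) A B (1\<^sub>m n)"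
  define L where "L = four_block_mat (1\<^sub>m k) (- A) (0\<^sub>m n k) (x \<cdot>\<^sub>m 1\<^sub>m n)"
  have M: "M \<in> carrier_mat (k + n) (k + n)" and L: "L \<in> carrier_mat (k + n) (k + n)"
    using A B by (auto simp: M_def L_def)
  have L_M: "L * M = four_block_mat (x \<cdot>\<^sub>m 1\<^sub>m k - A * B) (0\<^sub>m k n) (x \<cdot>\<^sub>m B) (x \<cdot>\<^sub>m 1\<^sub>m n)"
    unfolding L_def M_def using A B
    by (subst mult_four_block_mat[of _ k k _ n _ n _ _ k _ n]) (auto intro!: eq_matI)
  have M_L: "M * L = four_block_mat (x \<cdot>\<^sub>m 1\<^sub>m k) (0\<^sub>m k n) B (x \<cdot>\<^sub>m 1\<^sub>m n - B * A)"
    unfolding L_def M_def using A B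
    by (subst mult_four_block_mat[of _ k k _ n _ n _ _ k _ n])
      (auto intro!: eq_matI simp: carrier_vecI[of "col A _" k])
  have "det (x \<cdot>\<^sub>m 1\<^sub>m k - A * B) * x ^ n = det (L * M)" unfolding L_M
    by (subst det_four_block_mat_upper_right_zero[of _ k _ n]) (use A B in auto)
  also have "\<dots> = det (M * L)"
    using det_mult[OF L M] det_mult[OF M L] by simp
  also have "\<dots> = x ^ k * det (x \<cdot>\<^sub>m 1\<^sub>m n - B * A)" unfolding M_L
    by (subst det_four_block_mat_upper_right_zero[of _ k _ n]) (use A B in auto)
  finally show ?thesis by (simp add: mult.commute)
qed

lemma char_poly_mult_commute:
  fixes A :: "'a :: field_char_0 mat"
  assumes A: "A \<in> carrier_mat k n" and B: "B \<in> carrier_mat n k"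
  shows "monom 1 n * char_poly (A * B) = monom 1 k * char_poly (B * A)"
proof -
  have "poly (monom 1 n * char_poly (A * B)) x = poly (monom 1 k * char_poly (B * A)) x" for x
    using det_sylvester[OF A B, of x]
    by (simp add: poly_monom poly_char_poly[OF mult_carrier_mat[OF A B]]
        poly_char_poly[OF mult_carrier_mat[OF B A]])
  then show ?thesis by (simp add: poly_eq_poly_eq_iff[symmetric] fun_eq_iff)
qed

lemma real_roots_char_poly_mult_commute:
  fixes A :: "'a :: {field_char_0, real_algebra_1} mat"
  assumes A: "A \<in> carrier_mat k n" and B: "B \<in> carrier_mat n k"
    and "char_poly (A * B) = real_roots_poly X" and "char_poly (B * A) = real_roots_poly Y"
  shows "replicate_mset n 0 + X = replicate_mset k 0 + Y"
  using char_poly_mult_commute[OF A B] assms(3,4)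
  by (simp flip: real_roots_poly_replicate_zero real_roots_poly_union
      add: real_roots_poly_inject)

lemma prod_mset_uminus: "(\<Prod>a\<in>#X. - f a) = (- 1) ^ size X * (\<Prod>a\<in>#X. f a :: 'a :: comm_ring_1)"
  by (induction X) simp_all

lemma char_poly_complement:
  fixes A M :: "'a :: {field_char_0, real_algebra_1} mat"
  assumes A: "A \<in> carrier_mat k k" and M: "M \<in> carrier_mat k k"
    and sum: "M + A = of_real c \<cdot>\<^sub>m 1\<^sub>m k" and cp: "char_poly M = real_roots_poly X"
  shows "char_poly A = real_roots_poly (image_mset (\<lambda>a. c - a) X)"
proof -
  have size: "size X = k"
    using degree_monic_char_poly[OF M] by (simp add: cp degree_real_roots_poly)
  have entry: "M $$ (i, j) + A $$ (i, j) = (of_real c \<cdot>\<^sub>m 1\<^sub>m k) $$ (i, j)"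
    if "i < k" "j < k" for i j
    using arg_cong[OF sum, of "\<lambda>B. B $$ (i, j)"] A M that by simp
  have "poly (char_poly A) x = poly (real_roots_poly (image_mset (\<lambda>a. c - a) X)) x" for x :: 'a
  proof -
    have "x \<cdot>\<^sub>m 1\<^sub>m k - A = (- 1) \<cdot>\<^sub>m ((of_real c - x) \<cdot>\<^sub>m 1\<^sub>m k - M)"
      using A M entry by (intro eq_matI) (force simp: algebra_simps eq_diff_eq)+
    then have "poly (char_poly A) x = (- 1) ^ k * poly (char_poly M) (of_real c - x)"
      using A M by (simp add: poly_char_poly det_smult)
    also have "\<dots> = (\<Prod>a\<in>#X. - (of_real c - x - of_real a))"
      by (subst prod_mset_uminus) (simp add: cp poly_real_roots_poly size)
    also have "\<dots> = (\<Prod>a\<in>#X. x - of_real (c - a))"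
      by (simp add: algebra_simps)
    finally show ?thesis
      by (simp add: poly_real_roots_poly image_mset.compositionality o_def)
  qed
  then show ?thesis by (simp add: poly_eq_poly_eq_iff[symmetric] fun_eq_iff)
qed

section \<open>Adjoints and Gram matrices\<close>

lemma adj_dims [simp]: "dim_row (adj A) = dim_col A" "dim_col (adj A) = dim_row A"
  unfolding adj_def by auto

lemma adj_carrier_mat [simp]: "A \<in> carrier_mat k n \<Longrightarrow> adj A \<in> carrier_mat n k"
  unfolding adj_def by auto

lemma index_adj [simp]:
  "i < dim_col A \<Longrightarrow> j < dim_row A \<Longrightarrow> adj A $$ (i, j) = conjugate (A $$ (j, i))"
  unfolding adj_def by auto

lemma adj_adj [simp]: "adj (adj A) = A"
  by (intro eq_matI) auto

lemma adj_scalar_prod: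
  fixes A :: "'a :: conjugatable_field mat"
  assumes A: "A \<in> carrier_mat k n" and v: "v \<in> carrier_vec k" and w: "w \<in> carrier_vec n"
  shows "(A *\<^sub>v w) \<bullet>c v = w \<bullet>c (adj A *\<^sub>v v)"
proof -
  have "(A *\<^sub>v w) \<bullet>c v = (\<Sum>i<k. \<Sum>j<n. A $$ (i, j) * w $ j * conjugate (v $ i))"
    using assms by (simp add: scalar_prod_def sum_distrib_right lessThan_atLeast0)
  also have "\<dots> = (\<Sum>j<n. \<Sum>i<k. A $$ (i, j) * w $ j * conjugate (v $ i))"
    by (rule sum.swap)
  also have "\<dots> = w \<bullet>c (adj A *\<^sub>v v)"
    using assms by (simp add: scalar_prod_def sum_distrib_left sum_conjugate conjugate_dist_mul
        lessThan_atLeast0 mult_ac)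
  finally show ?thesis .
qed

lemma gram_eigenvalue_nonneg:
  fixes H :: "complex mat"
  assumes H: "H \<in> carrier_mat k n" and ev: "eigenvalue (H * adj H) c"
  shows "c \<ge> 0"
proof -
  obtain v where v: "v \<in> carrier_vec k" "v \<noteq> 0\<^sub>v k" and Hv: "H * adj H *\<^sub>v v = c \<cdot>\<^sub>v v"
    using ev H unfolding eigenvalue_def eigenvector_def by auto
  define w where "w = adj H *\<^sub>v v"
  have w: "w \<in> carrier_vec n" using H by (simp add: w_def carrier_vecI)
  have "c * (v \<bullet>c v) = (c \<cdot>\<^sub>v v) \<bullet>c v"
    using v by simp
  also have "\<dots> = (H *\<^sub>v w) \<bullet>c v"
    using assoc_mult_mat_vec[OF H adj_carrier_mat[OF H] v(1)] by (simp flip: Hv add: w_def)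
  also have "\<dots> = w \<bullet>c w"
    using adj_scalar_prod[OF H v(1) w] by (simp add: w_def)
  finally have "c * (v \<bullet>c v) \<ge> 0" using conjugate_square_ge_0_vec[of w] by simp
  moreover have "v \<bullet>c v > 0" using v by simp
  ultimately show ?thesis
    by (auto simp: less_eq_complex_def less_complex_def zero_le_mult_iff)
qed

definition nonneg_real_spectrum :: "'a :: {comm_ring_1, real_algebra_1} mat \<Rightarrow> bool" where
  "nonneg_real_spectrum M \<longleftrightarrow> (\<exists>X. (\<forall>a\<in>#X. 0 \<le> a) \<and> char_poly M = real_roots_poly X)"

lemma nonneg_real_spectrum_gram_complex:
  fixes H :: "complex mat"
  shows "nonneg_real_spectrum (H * adj H)"
proof -
  define k n where "k = dim_row H" and "n = dim_col H"
  then have H: "H \<in> carrier_mat k n" by auto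
  have M: "H * adj H \<in> carrier_mat k k" using H by simp
  obtain cs where cs: "char_poly (H * adj H) = (\<Prod>a\<leftarrow>cs. [:- a, 1:])"
    using char_poly_factorized[OF M] by blast
  have "c \<ge> 0" if "c \<in> set cs" for c
  proof (rule gram_eigenvalue_nonneg[OF H])
    show "eigenvalue (H * adj H) c"
      using that by (simp add: eigenvalue_root_char_poly[OF M] cs poly_prod_list
          prod_list_zero_iff image_iff)
  qed
  then have real: "of_real (Re c) = c" "Re c \<ge> 0" if "c \<in> set cs" for c
    using that by (auto simp: less_eq_complex_def complex_eq_iff)
  show ?thesis
    unfolding nonneg_real_spectrum_def
  proof (intro exI conjI)
    show "\<forall>a\<in>#mset (map Re cs). 0 \<le> a" using real(2) by auto
    show "char_poly (H * adj H) = real_roots_poly (mset (map Re cs))"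
      unfolding cs real_roots_poly_mset using real(1) by (simp add: o_def cong: map_cong)
  qed
qed

lemma nonneg_real_spectrum_gram_real:
  fixes H :: "real mat"
  shows "nonneg_real_spectrum (H * adj H)"
proof -
  define k n where "k = dim_row H" and "n = dim_col H"
  then have H: "H \<in> carrier_mat k n" by auto
  let ?Hc = "map_mat complex_of_real H"
  interpret hom: map_poly_inj_comm_ring_hom complex_of_real ..
  have "adj ?Hc = map_mat complex_of_real (adj H)"
    by (intro eq_matI) auto
  then have "?Hc * adj ?Hc = map_mat complex_of_real (H * adj H)"
    using H by (simp add: of_real_hom.mat_hom_mult[of H k n "adj H" k])
  then have "char_poly (?Hc * adj ?Hc) = map_poly complex_of_real (char_poly (H * adj H))"
    using H by (simp add: of_real_hom.char_poly_hom[of _ k])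
  moreover obtain X where X: "\<forall>a\<in>#X. 0 \<le> a" "char_poly (?Hc * adj ?Hc) = real_roots_poly X"
    using nonneg_real_spectrum_gram_complex[of ?Hc] unfolding nonneg_real_spectrum_def by auto
  moreover have "map_poly complex_of_real (real_roots_poly X) = real_roots_poly X"
    by (simp add: real_roots_poly_def hom.hom_prod_mset image_mset.compositionality o_def)
  ultimately show ?thesis
    unfolding nonneg_real_spectrum_def by (metis hom.eq_iff)
qed

lemma mult_adj_index:
  "i < dim_row A \<Longrightarrow> j < dim_row A \<Longrightarrow>
    (A * adj A) $$ (i, j) = (\<Sum>l<dim_col A. A $$ (i, l) * conjugate (A $$ (j, l)))"
  by (auto simp: scalar_prod_def lessThan_atLeast0 intro!: sum.cong)

lemma adj_mult_index:
  "i < dim_col A \<Longrightarrow> j < dim_col A \<Longrightarrow>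
    (adj A * A) $$ (i, j) = (\<Sum>l<dim_row A. conjugate (A $$ (l, i)) * A $$ (l, j))"
  by (auto simp: scalar_prod_def lessThan_atLeast0 intro!: sum.cong)

section \<open>Partial frame operators\<close>

lemma first_cols_dims [simp]: "dim_row (first_cols H n) = dim_row H" "dim_col (first_cols H n) = n"
  unfolding first_cols_def by auto

lemma first_cols_index [simp]: "i < dim_row H \<Longrightarrow> j < n \<Longrightarrow> first_cols H n $$ (i, j) = H $$ (i, j)"
  unfolding first_cols_def by auto

lemma rev_cols_dims [simp]: "dim_row (rev_cols H) = dim_row H" "dim_col (rev_cols H) = dim_col H"
  unfolding rev_cols_def by auto

lemma rev_cols_index [simp]:
  "i < dim_row H \<Longrightarrow> j < dim_col H \<Longrightarrow> rev_cols H $$ (i, j) = H $$ (i, dim_col H - 1 - j)"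
  unfolding rev_cols_def by auto

lemma tight_equal_norm_frame_operator:
  fixes F :: "'a :: {conjugatable_field, field_char_0} mat"
  assumes d: "d \<ge> 1" and F: "F \<in> carrier_mat d N" and "tight F"
    and norm: "\<forall>j<N. colnorm2 F j = of_nat d"
  shows "F * adj F = of_nat N \<cdot>\<^sub>m 1\<^sub>m d"
proof -
  obtain c where c: "F * adj F = c \<cdot>\<^sub>m 1\<^sub>m d"
    using \<open>tight F\<close> F unfolding tight_def by auto
  have "c * of_nat d = (\<Sum>a<d. (F * adj F) $$ (a, a))"
    unfolding c by simp
  also have "\<dots> = (\<Sum>a<d. \<Sum>l<N. F $$ (a, l) * conjugate (F $$ (a, l)))"
    using F by (intro sum.cong refl, subst mult_adj_index) auto
  also have "\<dots> = (\<Sum>l<N. \<Sum>a<d. F $$ (a, l) * conjugate (F $$ (a, l)))"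
    by (rule sum.swap)
  also have "\<dots> = of_nat N * of_nat d"
    using F norm by (simp add: colnorm2_def)
  finally show ?thesis
    using c d by simp
qed

lemma frame_operator_split:
  assumes H: "H \<in> carrier_mat k N" and n: "n \<le> N"
  shows "first_cols H (N - n) * adj (first_cols H (N - n)) +
      first_cols (rev_cols H) n * adj (first_cols (rev_cols H) n) = H * adj H"
proof (rule eq_matI)
  fix a b assume "a < dim_row (H * adj H)" "b < dim_col (H * adj H)"
  then have a: "a < k" and b: "b < k" using H by auto
  define g where "g l = H $$ (a, l) * conjugate (H $$ (b, l))" for l
  have "(first_cols (rev_cols H) n * adj (first_cols (rev_cols H) n)) $$ (a, b) =
      (\<Sum>j<n. g (N - 1 - j))"
    using a b n H by (subst mult_adj_index) (auto simp: g_def)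
  also have "\<dots> = (\<Sum>l\<in>{N - n..<N}. g l)"
    by (rule sum.reindex_bij_witness[where i = "\<lambda>l. N - 1 - l" and j = "\<lambda>l. N - 1 - l"])
      (use n in auto)
  finally have last: "(first_cols (rev_cols H) n * adj (first_cols (rev_cols H) n)) $$ (a, b) =
      (\<Sum>l\<in>{N - n..<N}. g l)" .
  have first: "(first_cols H (N - n) * adj (first_cols H (N - n))) $$ (a, b) = (\<Sum>l<N - n. g l)"
    using a b H by (subst mult_adj_index) (auto simp: g_def)
  have "(H * adj H) $$ (a, b) = (\<Sum>l<N. g l)"
    using a b H by (subst mult_adj_index) (auto simp: g_def)
  also have "\<dots> = (\<Sum>l<N - n. g l) + (\<Sum>l\<in>{N - n..<N}. g l)"
    by (simp add: lessThan_atLeast0 sum.atLeastLessThan_concat)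
  finally show "(first_cols H (N - n) * adj (first_cols H (N - n)) +
      first_cols (rev_cols H) n * adj (first_cols (rev_cols H) n)) $$ (a, b) = (H * adj H) $$ (a, b)"
    using a b H first last by simp
qed (use H in auto)

lemma adj_first_cols_rev_cols_index:
  assumes "i < n" "j < n" "n \<le> dim_col H"
  shows "(adj (first_cols (rev_cols H) n) * first_cols (rev_cols H) n) $$ (i, j) =
    (adj H * H) $$ (dim_col H - 1 - i, dim_col H - 1 - j)"
  using assms by (subst (1 2) adj_mult_index) (auto intro: sum.cong)

lemma naimark_first_cols_rev_cols:
  assumes F: "F \<in> carrier_mat d N" and G: "G \<in> carrier_mat (N - d) N"
    and naimark: "adj F * F + adj G * G = of_nat N \<cdot>\<^sub>m 1\<^sub>m N" and n: "n \<le> N"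
  shows "adj (first_cols (rev_cols F) n) * first_cols (rev_cols F) n +
      adj (first_cols (rev_cols G) n) * first_cols (rev_cols G) n = of_nat N \<cdot>\<^sub>m 1\<^sub>m n"
proof (rule eq_matI)
  fix i j assume "i < dim_row (of_nat N \<cdot>\<^sub>m 1\<^sub>m n :: 'a mat)" "j < dim_col (of_nat N \<cdot>\<^sub>m 1\<^sub>m n :: 'a mat)"
  then have i: "i < n" and j: "j < n" by auto
  have "(adj (first_cols (rev_cols F) n) * first_cols (rev_cols F) n +
      adj (first_cols (rev_cols G) n) * first_cols (rev_cols G) n) $$ (i, j) =
      (adj F * F + adj G * G) $$ (N - 1 - i, N - 1 - j)"
    using F G i j n by (simp add: adj_first_cols_rev_cols_index del: index_mult_mat(1))
  also have "\<dots> = (of_nat N \<cdot>\<^sub>m 1\<^sub>m N :: 'a mat) $$ (N - 1 - i, N - 1 - j)"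
    unfolding naimark ..
  finally show "(adj (first_cols (rev_cols F) n) * first_cols (rev_cols F) n +
      adj (first_cols (rev_cols G) n) * first_cols (rev_cols G) n) $$ (i, j) =
      (of_nat N \<cdot>\<^sub>m 1\<^sub>m n :: 'a mat) $$ (i, j)"
    using i j n by auto
qed auto

section \<open>Eigenvalue sequences of a Naimark complement\<close>

lemma eigenvalues_desc_nonneg_real_spectrum:
  fixes M :: "'a :: {idom, real_algebra_1} mat"
  assumes M: "M \<in> carrier_mat k k" and "nonneg_real_spectrum M"
  shows "char_poly M = real_roots_poly (mset (eigenvalues_desc M))"
    and "sorted_wrt (\<ge>) (eigenvalues_desc M)" and "\<forall>a\<in>set (eigenvalues_desc M). 0 \<le> a"
    and "length (eigenvalues_desc M) = k"
proof -
  obtain X where X: "\<forall>a\<in>#X. 0 \<le> a" "char_poly M = real_roots_poly X"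
    using assms(2) unfolding nonneg_real_spectrum_def by blast
  then show "char_poly M = real_roots_poly (mset (eigenvalues_desc M))"
    and "sorted_wrt (\<ge>) (eigenvalues_desc M)" and "\<forall>a\<in>set (eigenvalues_desc M). 0 \<le> a"
    and "length (eigenvalues_desc M) = k"
    using eigenvalues_desc_char_poly[OF M X(2)] by (auto simp flip: set_mset_mset)
qed

definition lambda_col :: "'a :: {conjugatable_field, real_algebra_1} mat \<Rightarrow> nat \<Rightarrow> real list" where
  "lambda_col H n = eigenvalues_desc (first_cols H n * adj (first_cols H n))"

lemma lambda_mat_lambda_col: "lambda_mat H i n = lambda_col H n ! i"
  unfolding lambda_mat_def lambda_col_def ..

lemma lambda_col_spectrum:
  fixes H :: "'a :: {conjugatable_field, real_algebra_1} mat"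
  assumes "nonneg_real_spectrum (first_cols H n * adj (first_cols H n))"
  shows "char_poly (first_cols H n * adj (first_cols H n)) = real_roots_poly (mset (lambda_col H n))"
    and "sorted_wrt (\<ge>) (lambda_col H n)" and "\<forall>a\<in>set (lambda_col H n). 0 \<le> a"
    and "length (lambda_col H n) = dim_row H"
proof -
  have "first_cols H n * adj (first_cols H n) \<in> carrier_mat (dim_row H) (dim_row H)"
    by (intro carrier_matI) simp_all
  from eigenvalues_desc_nonneg_real_spectrum[OF this assms]
  show "char_poly (first_cols H n * adj (first_cols H n)) = real_roots_poly (mset (lambda_col H n))"
    and "sorted_wrt (\<ge>) (lambda_col H n)" and "\<forall>a\<in>set (lambda_col H n). 0 \<le> a"
    and "length (lambda_col H n) = dim_row H"
    unfolding lambda_col_def .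
qed

text \<open>The hypothesis \<open>gram\<close> holds for real and complex matrices alike; assuming it lets one
  argument serve both fields.\<close>

lemma naimark_lambda_col_mset:
  fixes F G :: "'a :: {conjugatable_field, real_algebra_1, field_char_0} mat"
  assumes gram: "\<And>H :: 'a mat. nonneg_real_spectrum (H * adj H)"
    and F: "F \<in> carrier_mat d N" and G: "G \<in> carrier_mat (N - d) N"
    and frame_op: "F * adj F = of_nat N \<cdot>\<^sub>m 1\<^sub>m d"
    and naimark: "adj F * F + adj G * G = of_nat N \<cdot>\<^sub>m 1\<^sub>m N" and n: "n \<le> N"
  shows "replicate_mset d (real N) + mset (lambda_col (rev_cols G) n) + replicate_mset n 0 =
    replicate_mset n (real N) + mset (lambda_col F (N - n)) + replicate_mset (N - d) 0"
proof -
  define Fm Q P where "Fm = first_cols F (N - n)" and "Q = first_cols (rev_cols F) n"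
    and "P = first_cols (rev_cols G) n"
  have Fm: "Fm \<in> carrier_mat d (N - n)" and Q: "Q \<in> carrier_mat d n" and P: "P \<in> carrier_mat (N - d) n"
    using F G by (auto simp: Fm_def Q_def P_def)
  define \<mu> \<nu> where "\<mu> = mset (lambda_col F (N - n))" and "\<nu> = mset (lambda_col (rev_cols G) n)"
  have char_Fm: "char_poly (Fm * adj Fm) = real_roots_poly \<mu>"
    unfolding \<mu>_def Fm_def by (rule lambda_col_spectrum(1)[OF gram])
  have char_P: "char_poly (P * adj P) = real_roots_poly \<nu>"
    unfolding \<nu>_def P_def by (rule lambda_col_spectrum(1)[OF gram])
  obtain K where char_QQ: "char_poly (adj Q * Q) = real_roots_poly K"
    using gram[of "adj Q"] unfolding nonneg_real_spectrum_def by auto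
  have "Fm * adj Fm + Q * adj Q = of_real (real N) \<cdot>\<^sub>m 1\<^sub>m d"
    using frame_operator_split[OF F n] frame_op by (simp add: Fm_def Q_def)
  then have char_Q: "char_poly (Q * adj Q) = real_roots_poly (image_mset (\<lambda>a. real N - a) \<mu>)"
    using Fm Q char_Fm by (intro char_poly_complement) auto
  have "adj Q * Q + adj P * P = of_real (real N) \<cdot>\<^sub>m 1\<^sub>m n"
    using naimark_first_cols_rev_cols[OF F G naimark n] by (simp add: P_def Q_def)
  then have char_PP: "char_poly (adj P * P) = real_roots_poly (image_mset (\<lambda>a. real N - a) K)"
    using P Q char_QQ by (intro char_poly_complement) auto
  have Q_swap: "replicate_mset n 0 + image_mset (\<lambda>a. real N - a) \<mu> = replicate_mset d 0 + K"
    using real_roots_char_poly_mult_commute[OF Q _ char_Q char_QQ] Q by simp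
  have P_swap: "replicate_mset n 0 + \<nu> = replicate_mset (N - d) 0 + image_mset (\<lambda>a. real N - a) K"
    using real_roots_char_poly_mult_commute[OF P _ char_P char_PP] P by simp
  have "replicate_mset n (real N) + \<mu> = replicate_mset d (real N) + image_mset (\<lambda>a. real N - a) K"
    using arg_cong[OF Q_swap, of "image_mset (\<lambda>a. real N - a)"]
    by (simp add: image_mset.compositionality o_def)
  then show ?thesis
    using P_swap unfolding \<mu>_def[symmetric] \<nu>_def[symmetric]
    by (metis add.assoc add.commute)
qed

lemma lambda_col_le:
  fixes F :: "'a :: {conjugatable_field, real_algebra_1, field_char_0} mat"
  assumes gram: "\<And>H :: 'a mat. nonneg_real_spectrum (H * adj H)"
    and F: "F \<in> carrier_mat d N" and frame_op: "F * adj F = of_nat N \<cdot>\<^sub>m 1\<^sub>m d" and m: "m \<le> N"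
  shows "\<forall>a\<in>set (lambda_col F m). a \<le> real N"
proof -
  define Fm Q where "Fm = first_cols F m" and "Q = first_cols (rev_cols F) (N - m)"
  have Fm: "Fm \<in> carrier_mat d m" and Q: "Q \<in> carrier_mat d (N - m)"
    using F by (auto simp: Fm_def Q_def)
  have char_Fm: "char_poly (Fm * adj Fm) = real_roots_poly (mset (lambda_col F m))"
    unfolding Fm_def by (rule lambda_col_spectrum(1)[OF gram])
  have "Fm * adj Fm + Q * adj Q = of_real (real N) \<cdot>\<^sub>m 1\<^sub>m d"
    using frame_operator_split[OF F, of "N - m"] frame_op m by (simp add: Fm_def Q_def)
  then have "char_poly (Q * adj Q) = real_roots_poly (image_mset (\<lambda>a. real N - a) (mset (lambda_col F m)))"
    using Fm Q char_Fm by (intro char_poly_complement) auto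
  moreover obtain X where "\<forall>a\<in>#X. 0 \<le> a" "char_poly (Q * adj Q) = real_roots_poly X"
    using gram[of Q] unfolding nonneg_real_spectrum_def by blast
  ultimately show ?thesis
    by (auto simp: real_roots_poly_inject)
qed

lemma naimark_complement_lambda_mat:
  fixes F G :: "'a :: {conjugatable_field, real_algebra_1, field_char_0} mat"
  assumes gram: "\<And>H :: 'a mat. nonneg_real_spectrum (H * adj H)"
    and d: "d \<ge> 1" and F: "F \<in> carrier_mat d N" and "tight F"
    and norm: "\<forall>j<N. colnorm2 F j = of_nat d" and G: "G \<in> carrier_mat (N - d) N"
    and naimark: "adj F * F + adj G * G = of_nat N \<cdot>\<^sub>m 1\<^sub>m N"
    and r: "r < N - d" and n: "n \<le> N"
  shows "Psi N d (lambda_mat F) r n = lambda_mat (rev_cols G) r n"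
proof -
  have frame_op: "F * adj F = of_nat N \<cdot>\<^sub>m 1\<^sub>m d"
    using tight_equal_norm_frame_operator[OF d F \<open>tight F\<close> norm] .
  define \<mu> \<nu> where "\<mu> = lambda_col F (N - n)" and "\<nu> = lambda_col (rev_cols G) n"
  have \<mu>: "length \<mu> = d" "sorted_wrt (\<ge>) \<mu>" "\<forall>a\<in>set \<mu>. 0 \<le> a \<and> a \<le> real N"
    using lambda_col_spectrum(2-4)[OF gram] lambda_col_le[OF gram F frame_op, of "N - n"] F
    by (auto simp: \<mu>_def)
  have \<nu>: "length \<nu> = N - d" "sorted_wrt (\<ge>) \<nu>" "\<forall>a\<in>set \<nu>. 0 \<le> a"
    using lambda_col_spectrum(2-4)[OF gram] G by (auto simp: \<nu>_def)
  have eq: "mset (replicate d (real N) @ \<nu> @ replicate n 0) = mset (replicate n (real N) @ \<mu> @ replicate (N - d) 0)"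
    using naimark_lambda_col_mset[OF gram F G frame_op naimark n] by (simp add: \<mu>_def \<nu>_def add.assoc)
  have sorted_eq: "replicate d (real N) @ \<nu> @ replicate n 0 =
      replicate n (real N) @ \<mu> @ replicate (N - d) 0"
    using \<mu>(2,3) \<nu>(2,3) eq by (intro sorted_desc_padded_unique) simp_all
  have "lambda_mat (rev_cols G) r n = (replicate d (real N) @ \<nu> @ replicate n 0) ! (d + r)"
    using \<nu>(1) r by (simp add: lambda_mat_lambda_col \<nu>_def nth_append)
  also have "\<dots> = (replicate n (real N) @ \<mu> @ replicate (N - d) 0) ! (d + r)"
    unfolding sorted_eq ..
  also have "\<dots> = Psi N d (lambda_mat F) r n"
    unfolding Psi_def lambda_mat_lambda_col \<mu>_def[symmetric] using \<mu>(1) r by (auto simp: nth_append)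
  finally show ?thesis ..
qed

theorem proposition5p3:
  shows
  "(\<forall>(N::nat) (d::nat) (F::real mat) (G::real mat).
      1 \<le> d \<and> d \<le> N - 1 \<and>
      F \<in> carrier_mat d N \<and> spanning F \<and> tight F \<and> (\<forall>j<N. colnorm2 F j = of_nat d) \<and>
      G \<in> carrier_mat (N - d) N \<and> spanning G \<and>
      adj F * F + adj G * G = of_nat N \<cdot>\<^sub>m 1\<^sub>m N
      \<longrightarrow> (\<forall>r < N - d. \<forall>n \<le> N. Psi N d (lambda_mat F) r n = lambda_mat (rev_cols G) r n))
 \<and> (\<forall>(N::nat) (d::nat) (F::complex mat) (G::complex mat).
      1 \<le> d \<and> d \<le> N - 1 \<and>
      F \<in> carrier_mat d N \<and> spanning F \<and> tight F \<and> (\<forall>j<N. colnorm2 F j = of_nat d) \<and>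
      G \<in> carrier_mat (N - d) N \<and> spanning G \<and>
      adj F * F + adj G * G = of_nat N \<cdot>\<^sub>m 1\<^sub>m N
      \<longrightarrow> (\<forall>r < N - d. \<forall>n \<le> N. Psi N d (lambda_mat F) r n = lambda_mat (rev_cols G) r n))"
  using naimark_complement_lambda_mat[OF nonneg_real_spectrum_gram_real]
    naimark_complement_lambda_mat[OF nonneg_real_spectrum_gram_complex]
  by blast

end
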